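(* Let $(V,E,\sigma)$ be an influence graph and let $\mu : V \rightarrow \{+,-\}$ be a (partial) vertex labeling. If the disjunctive logic program $P_C\cup\tau((V,E,\sigma),\mu)$ has an answer set, then $(V,E,\sigma)$ and $\mu$ are consistent.
   Context: An influence graph is a triple $(V,E,\sigma)$ where $V$ is a finite set of vertices, $E\subseteq V\times V$ is a set of directed edges (an edge from $j$ to $i$ is written $j\rightarrow i$), and $\sigma : E\rightarrow\{+,-\}$ is a partial labeling of the edges; in addition, some vertices of $V$ are designated as input vertices. Signs are multiplied as numbers ($++=--=+$, $+-=-+=-$). Given a partial vertex labeling $\mu: V\rightarrow\{+,-\}$, the pair $(V,E,\sigma)$ and $\mu$ are called consistent if there exist total extensions $\sigma':E\rightarrow\{+,-\}$ of $\sigma$ and $\mu':V\rightarrow\{+,-\}$ of $\mu$ such that for every non-input vertex $i\in V$ there is an edge $j\rightarrow i$ in $E$ with $\mu'(i)=\mu'(j)\sigma'(j,i)$. Answer set semantics: a disjunctive logic program is a set of rules $a_1;\dots;a_l \leftarrow b_1,\dots,b_m,\mathit{not}\ c_1,\dots,\mathit{not}\ c_n$ (with $l=0$ giving an integrity constraint, whose empty head is false). Rules with (capitalized) variables stand for all their ground instances obtained by substituting constants occurring in the program; a built-in comparison $S\neq T$ in a body keeps only instances where the substituted constants differ. For a set $X$ of ground atoms, the reduct $P^X$ consists of $\{a_1,\dots,a_l\}\leftarrow b_1,\dots,b_m$ for each ground rule with $\{c_1,\dots,c_n\}\cap X=\emptyset$; $X$ is an answer set of $P$ if it is a $\subseteq$-minimal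 model of $P^X$ (a rule is satisfied if some head atom is in $X$ whenever all $b_k$ are in $X$). Here $+$ and $-$ are constants and vertex names are constants. The instance $\tau((V,E,\sigma),\mu)$ is the set of facts: $\mathit{vertex}(i)$ for each $i\in V$; $\mathit{edge}(j,i)$ for each $j\rightarrow i$ in $E$; $\mathit{observedE}(j,i,s)$ whenever $\sigma(j,i)=s$ is defined; $\mathit{observedV}(i,s)$ whenever $\mu(i)=s$ is defined; $\mathit{input}(i)$ for each input vertex $i$. The program $P_C$ consists of the rules $\mathit{labelV}(V,+);\mathit{labelV}(V,-)\leftarrow \mathit{vertex}(V)$; $\mathit{labelE}(U,V,+);\mathit{labelE}(U,V,-)\leftarrow \mathit{edge}(U,V)$; $\mathit{labelV}(V,S)\leftarrow \mathit{observedV}(V,S)$; $\mathit{labelE}(U,V,S)\leftarrow \mathit{observedE}(U,V,S)$; $\mathit{receive}(V,+)\leftarrow \mathit{labelE}(U,V,S),\mathit{labelV}(U,S)$; $\mathit{receive}(V,-)\leftarrow \mathit{labelE}(U,V,S),\mathit{labelV}(U,T),S\neq T$; $\leftarrow \mathit{labelV}(V,S),\mathit{not}\ \mathit{receive}(V,S),\mathit{not}\ \mathit{input}(V)$. *)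

theory Defs
  imports Main
begin

datatype sign = Plus | Minus

fun smult :: "sign \<Rightarrow> sign \<Rightarrow> sign" where
  "smult Plus s = s"
| "smult Minus Plus = Minus"
| "smult Minus Minus = Plus"

text \<open>An influence graph: vertex set V, edge set E (pair (j,i) is the edge j -> i),
  partial edge labeling sigma, and set of input vertices Inp.\<close>

definition influence_graph ::
  "'v set \<Rightarrow> ('v \<times> 'v) set \<Rightarrow> ('v \<times> 'v \<rightharpoonup> sign) \<Rightarrow> 'v set \<Rightarrow> bool" where
  "influence_graph V E \<sigma> Inp \<longleftrightarrow> finite V \<and> E \<subseteq> V \<times> V \<and> dom \<sigma> \<subseteq> E \<and> Inp \<subseteq> V"

definition consistent ::
  "'v set \<Rightarrow> ('v \<times> 'v) set \<Rightarrow> ('v \<times> 'v \<rightharpoonup> sign) \<Rightarrow> 'v set \<Rightarrow> ('v \<rightharpoonup> sign) \<Rightarrow> bool" where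
  "consistent V E \<sigma> Inp \<mu> \<longleftrightarrow>
     (\<exists>\<sigma>' :: 'v \<times> 'v \<Rightarrow> sign. \<exists>\<mu>' :: 'v \<Rightarrow> sign.
        (\<forall>e \<in> E. \<forall>s. \<sigma> e = Some s \<longrightarrow> \<sigma>' e = s) \<and>
        (\<forall>i \<in> V. \<forall>s. \<mu> i = Some s \<longrightarrow> \<mu>' i = s) \<and>
        (\<forall>i \<in> V - Inp. \<exists>j. (j, i) \<in> E \<and> \<mu>' i = smult (\<mu>' j) (\<sigma>' (j, i))))"

record 'a rule =
  hd :: "'a set"
  pos :: "'a set"
  neg :: "'a set"

type_synonym 'a program = "'a rule set"

definition reduct :: "'a program \<Rightarrow> 'a set \<Rightarrow> 'a program" where
  "reduct P X = {\<lparr>hd = hd r, pos = pos r, neg = {}\<rparr> | r. r \<in> P \<and> neg r \<inter> X = {}}"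

definition is_model :: "'a program \<Rightarrow> 'a set \<Rightarrow> bool" where
  "is_model P X \<longleftrightarrow> (\<forall>r \<in> P. pos r \<subseteq> X \<longrightarrow> hd r \<inter> X \<noteq> {})"

definition answer_set :: "'a program \<Rightarrow> 'a set \<Rightarrow> bool" where
  "answer_set P X \<longleftrightarrow> is_model (reduct P X) X \<and> (\<forall>Y. Y \<subset> X \<longrightarrow> \<not> is_model (reduct P X) Y)"

datatype 'v cst = CV 'v | CPlus | CMinus

fun csign :: "sign \<Rightarrow> 'v cst" where
  "csign Plus = CPlus"
| "csign Minus = CMinus"

datatype 'v atom =
    Vertex "'v cst"
  | Edge "'v cst" "'v cst"
  | ObservedE "'v cst" "'v cst" "'v cst"
  | ObservedV "'v cst" "'v cst"
  | Input "'v cst"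
  | LabelV "'v cst" "'v cst"
  | LabelE "'v cst" "'v cst" "'v cst"
  | Receive "'v cst" "'v cst"

definition fact :: "'a \<Rightarrow> 'a rule" where
  "fact a = \<lparr>hd = {a}, pos = {}, neg = {}\<rparr>"

definition tau ::
  "'v set \<Rightarrow> ('v \<times> 'v) set \<Rightarrow> ('v \<times> 'v \<rightharpoonup> sign) \<Rightarrow> 'v set \<Rightarrow> ('v \<rightharpoonup> sign) \<Rightarrow> 'v atom program" where
  "tau V E \<sigma> Inp \<mu> =
      {fact (Vertex (CV i)) | i. i \<in> V}
    \<union> {fact (Edge (CV j) (CV i)) | j i. (j, i) \<in> E}
    \<union> {fact (ObservedE (CV j) (CV i) (csign s)) | j i s. \<sigma> (j, i) = Some s}
    \<union> {fact (ObservedV (CV i) (csign s)) | i s. \<mu> i = Some s}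
    \<union> {fact (Input (CV i)) | i. i \<in> Inp}"

text \<open>Herbrand universe: constants occurring in P_C \<union> tau (vertex names and +, -).\<close>
definition universe :: "'v set \<Rightarrow> 'v cst set" where
  "universe V = CV ` V \<union> {CPlus, CMinus}"

definition ground_PC :: "'v cst set \<Rightarrow> 'v atom program" where
  "ground_PC C =
      {\<lparr>hd = {LabelV v CPlus, LabelV v CMinus}, pos = {Vertex v}, neg = {}\<rparr> | v. v \<in> C}
    \<union> {\<lparr>hd = {LabelE u v CPlus, LabelE u v CMinus}, pos = {Edge u v}, neg = {}\<rparr> | u v. u \<in> C \<and> v \<in> C}
    \<union> {\<lparr>hd = {LabelV v s}, pos = {ObservedV v s}, neg = {}\<rparr> | v s. v \<in> C \<and> s \<in> C}
    \<union> {\<lparr>hd = {LabelE u v s}, pos = {ObservedE u v s}, neg = {}\<rparr> | u v s. u \<in> C \<and> v \<in> C \<and> s \<in> C}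
    \<union> {\<lparr>hd = {Receive v CPlus}, pos = {LabelE u v s, LabelV u s}, neg = {}\<rparr>
         | u v s. u \<in> C \<and> v \<in> C \<and> s \<in> C}
    \<union> {\<lparr>hd = {Receive v CMinus}, pos = {LabelE u v s, LabelV u t}, neg = {}\<rparr>
         | u v s t. u \<in> C \<and> v \<in> C \<and> s \<in> C \<and> t \<in> C \<and> s \<noteq> t}
    \<union> {\<lparr>hd = {}, pos = {LabelV v s}, neg = {Receive v s, Input v}\<rparr> | v s. v \<in> C \<and> s \<in> C}"

definition PC_tau ::
  "'v set \<Rightarrow> ('v \<times> 'v) set \<Rightarrow> ('v \<times> 'v \<rightharpoonup> sign) \<Rightarrow> 'v set \<Rightarrow> ('v \<rightharpoonup> sign) \<Rightarrow> 'v atom program" where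
  "PC_tau V E \<sigma> Inp \<mu> = ground_PC (universe V) \<union> tau V E \<sigma> Inp \<mu>"

end

theory Submission
  imports Defs
begin

text \<open>
  Fix an answer set X and read total labelings off it: observed signs are kept, and every
  other vertex or edge gets sign + exactly when its label + belongs to X. All atoms these
  labelings predict (the facts, one label per vertex and per edge, and the signals received
  along edges) form a model of the reduct contained in X, so by minimality they are all of X.
  The integrity constraint then says that a non-input vertex receives its own sign, and by the
  description of X this signal comes from an edge j \<rightarrow> i with \<mu>'(i) = \<mu>'(j)\<sigma>'(j,i).
\<close>

lemma is_model_reduct_iff:
  "is_model (reduct P X) Y \<longleftrightarrow> (\<forall>r \<in> P. neg r \<inter> X = {} \<longrightarrow> pos r \<subseteq> Y \<longrightarrow> hd r \<inter> Y \<noteq> {})"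
  unfolding is_model_def reduct_def by fastforce

lemma answer_set_rule:
  assumes "answer_set P X" "r \<in> P" "neg r \<inter> X = {}" "pos r \<subseteq> X"
  shows "hd r \<inter> X \<noteq> {}"
  using assms unfolding answer_set_def is_model_reduct_iff by blast

lemma answer_set_positive_rule:
  assumes "answer_set P X" "\<lparr>hd = H, pos = B, neg = {}\<rparr> \<in> P" "B \<subseteq> X"
  shows "H \<inter> X \<noteq> {}"
  using answer_set_rule[OF assms(1,2)] assms(3) by simp

lemma answer_set_fact:
  assumes "answer_set P X" "fact a \<in> P"
  shows "a \<in> X"
  using answer_set_positive_rule[OF assms(1)] assms(2) unfolding fact_def by blast

lemma answer_set_eq_submodel:
  assumes "answer_set P X" "is_model (reduct P X) Y" "Y \<subseteq> X"
  shows "Y = X"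
  using assms unfolding answer_set_def by blast

lemma csign_eq_iff [simp]: "csign a = csign b \<longleftrightarrow> a = b"
  by (cases a; cases b) simp_all

lemma csign_eq_const_iff [simp]:
  "csign s = CPlus \<longleftrightarrow> s = Plus" "csign s = CMinus \<longleftrightarrow> s = Minus"
  "CPlus = csign s \<longleftrightarrow> s = Plus" "CMinus = csign s \<longleftrightarrow> s = Minus"
  by (cases s; simp)+

lemma sign_neq_iff [simp]: "s \<noteq> Minus \<longleftrightarrow> s = Plus" "s \<noteq> Plus \<longleftrightarrow> s = Minus"
  by (cases s; simp)+

lemma csign_in_universe [simp]: "csign a \<in> universe V"
  by (cases a) (simp_all add: universe_def)

lemma smult_self [simp]: "smult a a = Plus"
  by (cases a) simp_all

lemma smult_neq: "a \<noteq> b \<Longrightarrow> smult a b = Minus"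
  by (cases a; cases b) simp_all

lemma CV_in_universe [simp]: "CV i \<in> universe V \<longleftrightarrow> i \<in> V"
  by (auto simp: universe_def)

lemma fact_in_tau_iff:
  "fact a \<in> tau V E \<sigma> Inp \<mu> \<longleftrightarrow>
     (\<exists>i \<in> V. a = Vertex (CV i)) \<or> (\<exists>j i. (j, i) \<in> E \<and> a = Edge (CV j) (CV i))
   \<or> (\<exists>j i s. \<sigma> (j, i) = Some s \<and> a = ObservedE (CV j) (CV i) (csign s))
   \<or> (\<exists>i s. \<mu> i = Some s \<and> a = ObservedV (CV i) (csign s))
   \<or> (\<exists>i \<in> Inp. a = Input (CV i))"
  unfolding tau_def fact_def by auto

lemma tau_facts: "r \<in> tau V E \<sigma> Inp \<mu> \<Longrightarrow> \<exists>a. r = fact a"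
  unfolding tau_def by auto

lemma ground_PC_choose_vertex:
  "v \<in> C \<Longrightarrow> \<lparr>hd = {LabelV v CPlus, LabelV v CMinus}, pos = {Vertex v}, neg = {}\<rparr> \<in> ground_PC C"
  unfolding ground_PC_def by (simp; blast)

lemma ground_PC_choose_edge:
  "\<lbrakk>u \<in> C; v \<in> C\<rbrakk> \<Longrightarrow>
   \<lparr>hd = {LabelE u v CPlus, LabelE u v CMinus}, pos = {Edge u v}, neg = {}\<rparr> \<in> ground_PC C"
  unfolding ground_PC_def by (simp; blast)

lemma ground_PC_observed_vertex:
  "\<lbrakk>v \<in> C; s \<in> C\<rbrakk> \<Longrightarrow> \<lparr>hd = {LabelV v s}, pos = {ObservedV v s}, neg = {}\<rparr> \<in> ground_PC C"
  unfolding ground_PC_def by (simp; blast)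

lemma ground_PC_observed_edge:
  "\<lbrakk>u \<in> C; v \<in> C; s \<in> C\<rbrakk> \<Longrightarrow>
   \<lparr>hd = {LabelE u v s}, pos = {ObservedE u v s}, neg = {}\<rparr> \<in> ground_PC C"
  unfolding ground_PC_def by (simp; blast)

lemma ground_PC_receive_plus:
  "\<lbrakk>u \<in> C; v \<in> C; s \<in> C\<rbrakk> \<Longrightarrow>
   \<lparr>hd = {Receive v CPlus}, pos = {LabelE u v s, LabelV u s}, neg = {}\<rparr> \<in> ground_PC C"
  unfolding ground_PC_def by (simp; blast)

lemma ground_PC_receive_minus:
  "\<lbrakk>u \<in> C; v \<in> C; s \<in> C; t \<in> C; s \<noteq> t\<rbrakk> \<Longrightarrow>
   \<lparr>hd = {Receive v CMinus}, pos = {LabelE u v s, LabelV u t}, neg = {}\<rparr> \<in> ground_PC C"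
  unfolding ground_PC_def by (simp; blast)

lemma ground_PC_constraint:
  "\<lbrakk>v \<in> C; s \<in> C\<rbrakk> \<Longrightarrow>
   \<lparr>hd = {}, pos = {LabelV v s}, neg = {Receive v s, Input v}\<rparr> \<in> ground_PC C"
  unfolding ground_PC_def by (simp; blast)

lemma ground_PC_cases:
  assumes "r \<in> ground_PC C"
  obtains (choose_vertex) v where "r = \<lparr>hd = {LabelV v CPlus, LabelV v CMinus}, pos = {Vertex v}, neg = {}\<rparr>"
  | (choose_edge) u v where "r = \<lparr>hd = {LabelE u v CPlus, LabelE u v CMinus}, pos = {Edge u v}, neg = {}\<rparr>"
  | (observed_vertex) v s where "r = \<lparr>hd = {LabelV v s}, pos = {ObservedV v s}, neg = {}\<rparr>"
  | (observed_edge) u v s where "r = \<lparr>hd = {LabelE u v s}, pos = {ObservedE u v s}, neg = {}\<rparr>"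
  | (receive_plus) u v s where "r = \<lparr>hd = {Receive v CPlus}, pos = {LabelE u v s, LabelV u s}, neg = {}\<rparr>"
  | (receive_minus) u v s t where "s \<noteq> t"
      "r = \<lparr>hd = {Receive v CMinus}, pos = {LabelE u v s, LabelV u t}, neg = {}\<rparr>"
  | (constraint) v s where "r = \<lparr>hd = {}, pos = {LabelV v s}, neg = {Receive v s, Input v}\<rparr>"
  using assms unfolding ground_PC_def by (elim UnE CollectE exE conjE) (simp_all add: that)

locale PC_answer_set =
  fixes V :: "'v set" and E :: "('v \<times> 'v) set" and \<sigma> :: "'v \<times> 'v \<rightharpoonup> sign"
    and Inp :: "'v set" and \<mu> :: "'v \<rightharpoonup> sign" and X :: "'v atom set"
  assumes edges_subset: "E \<subseteq> V \<times> V"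
    and dom_\<sigma>: "dom \<sigma> \<subseteq> E"
    and dom_\<mu>: "dom \<mu> \<subseteq> V"
    and answer_set: "answer_set (PC_tau V E \<sigma> Inp \<mu>) X"
begin

abbreviation "P \<equiv> PC_tau V E \<sigma> Inp \<mu>"

definition \<mu>' :: "'v \<Rightarrow> sign" where
  "\<mu>' i = (case \<mu> i of Some s \<Rightarrow> s | None \<Rightarrow> if LabelV (CV i) CPlus \<in> X then Plus else Minus)"

definition \<sigma>' :: "'v \<times> 'v \<Rightarrow> sign" where
  "\<sigma>' e = (case \<sigma> e of Some s \<Rightarrow> s
     | None \<Rightarrow> if LabelE (CV (fst e)) (CV (snd e)) CPlus \<in> X then Plus else Minus)"

lemma \<mu>'_extends: "\<mu> i = Some s \<Longrightarrow> \<mu>' i = s"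
  by (simp add: \<mu>'_def)

lemma \<sigma>'_extends: "\<sigma> e = Some s \<Longrightarrow> \<sigma>' e = s"
  by (simp add: \<sigma>'_def)

lemma ground_rule_in_program: "r \<in> ground_PC (universe V) \<Longrightarrow> r \<in> P"
  by (simp add: PC_tau_def)

lemma tau_fact_in_X: "fact a \<in> tau V E \<sigma> Inp \<mu> \<Longrightarrow> a \<in> X"
  using answer_set_fact[OF answer_set] by (simp add: PC_tau_def)

lemma positive_rule_fires:
  assumes "\<lparr>hd = H, pos = B, neg = {}\<rparr> \<in> ground_PC (universe V)" "B \<subseteq> X"
  shows "H \<inter> X \<noteq> {}"
  using answer_set_positive_rule[OF answer_set ground_rule_in_program] assms by blast

lemma vertex_label_in_X:
  assumes "i \<in> V"
  shows "LabelV (CV i) (csign (\<mu>' i)) \<in> X"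
proof (cases "\<mu> i")
  case None
  have "Vertex (CV i) \<in> X"
    using assms by (intro tau_fact_in_X) (simp add: fact_in_tau_iff)
  then have "{LabelV (CV i) CPlus, LabelV (CV i) CMinus} \<inter> X \<noteq> {}"
    using assms by (intro positive_rule_fires[OF ground_PC_choose_vertex]) auto
  then show ?thesis
    using None by (auto simp: \<mu>'_def)
next
  case (Some s)
  have "ObservedV (CV i) (csign s) \<in> X"
    using Some by (intro tau_fact_in_X) (auto simp: fact_in_tau_iff)
  then have "{LabelV (CV i) (csign s)} \<inter> X \<noteq> {}"
    using assms by (intro positive_rule_fires[OF ground_PC_observed_vertex]) auto
  then show ?thesis
    using Some by (simp add: \<mu>'_def)
qed

lemma edge_label_in_X:
  assumes "(j, i) \<in> E"
  shows "LabelE (CV j) (CV i) (csign (\<sigma>' (j, i))) \<in> X"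
proof -
  have ji: "j \<in> V" "i \<in> V"
    using assms edges_subset by auto
  show ?thesis
  proof (cases "\<sigma> (j, i)")
    case None
    have "Edge (CV j) (CV i) \<in> X"
      using assms by (intro tau_fact_in_X) (simp add: fact_in_tau_iff)
    then have "{LabelE (CV j) (CV i) CPlus, LabelE (CV j) (CV i) CMinus} \<inter> X \<noteq> {}"
      using ji by (intro positive_rule_fires[OF ground_PC_choose_edge]) auto
    then show ?thesis
      using None by (auto simp: \<sigma>'_def)
  next
    case (Some s)
    have "ObservedE (CV j) (CV i) (csign s) \<in> X"
      using Some by (intro tau_fact_in_X) (auto simp: fact_in_tau_iff)
    then have "{LabelE (CV j) (CV i) (csign s)} \<inter> X \<noteq> {}"
      using ji by (intro positive_rule_fires[OF ground_PC_observed_edge]) auto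
    then show ?thesis
      using Some by (simp add: \<sigma>'_def)
  qed
qed

lemma received_signal_in_X:
  assumes "(j, i) \<in> E"
  shows "Receive (CV i) (csign (smult (\<mu>' j) (\<sigma>' (j, i)))) \<in> X"
proof -
  have ji: "j \<in> V" "i \<in> V"
    using assms edges_subset by auto
  have body: "LabelE (CV j) (CV i) (csign (\<sigma>' (j, i))) \<in> X" "LabelV (CV j) (csign (\<mu>' j)) \<in> X"
    using edge_label_in_X[OF assms] vertex_label_in_X[OF ji(1)] .
  show ?thesis
  proof (cases "\<sigma>' (j, i) = \<mu>' j")
    case True
    then have "{Receive (CV i) CPlus} \<inter> X \<noteq> {}"
      using body ji by (intro positive_rule_fires[OF ground_PC_receive_plus]) auto
    then show ?thesis
      using True by simp
  next
    case False
    then have "{Receive (CV i) CMinus} \<inter> X \<noteq> {}"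
      using body ji by (intro positive_rule_fires[OF ground_PC_receive_minus]) auto
    then show ?thesis
      using False smult_neq[of "\<mu>' j"] by auto
  qed
qed

fun canonical :: "'v atom \<Rightarrow> bool" where
  "canonical (Vertex v) \<longleftrightarrow> (\<exists>i \<in> V. v = CV i)"
| "canonical (Edge u v) \<longleftrightarrow> (\<exists>j i. (j, i) \<in> E \<and> u = CV j \<and> v = CV i)"
| "canonical (ObservedE u v s) \<longleftrightarrow> (\<exists>j i t. \<sigma> (j, i) = Some t \<and> u = CV j \<and> v = CV i \<and> s = csign t)"
| "canonical (ObservedV v s) \<longleftrightarrow> (\<exists>i t. \<mu> i = Some t \<and> v = CV i \<and> s = csign t)"
| "canonical (Input v) \<longleftrightarrow> (\<exists>i \<in> Inp. v = CV i)"
| "canonical (LabelV v s) \<longleftrightarrow> (\<exists>i \<in> V. v = CV i \<and> s = csign (\<mu>' i))"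
| "canonical (LabelE u v s) \<longleftrightarrow> (\<exists>j i. (j, i) \<in> E \<and> u = CV j \<and> v = CV i \<and> s = csign (\<sigma>' (j, i)))"
| "canonical (Receive v s) \<longleftrightarrow>
     (\<exists>j i. (j, i) \<in> E \<and> v = CV i \<and> s = csign (smult (\<mu>' j) (\<sigma>' (j, i))))"

lemma canonical_subset_X: "Collect canonical \<subseteq> X"
proof
  fix a assume "a \<in> Collect canonical"
  then show "a \<in> X"
    by (cases a) (auto intro: tau_fact_in_X vertex_label_in_X edge_label_in_X received_signal_in_X
        simp: fact_in_tau_iff)
qed

lemma canonical_is_model: "is_model (reduct P X) (Collect canonical)"
  unfolding is_model_reduct_iff
proof (intro ballI impI)
  fix r assume r: "r \<in> P" "neg r \<inter> X = {}" "pos r \<subseteq> Collect canonical"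
  consider "r \<in> tau V E \<sigma> Inp \<mu>" | "r \<in> ground_PC (universe V)"
    using r(1) unfolding PC_tau_def by blast
  then show "hd r \<inter> Collect canonical \<noteq> {}"
  proof cases
    case 1
    then obtain a where a: "r = fact a" "fact a \<in> tau V E \<sigma> Inp \<mu>"
      using tau_facts by blast
    then have "canonical a"
      by (auto simp: fact_in_tau_iff)
    then show ?thesis
      using a(1) by (simp add: fact_def)
  next
    case 2
    then show ?thesis
    proof (cases rule: ground_PC_cases)
      case (constraint v s)
      have "pos r \<subseteq> X"
        using r(3) canonical_subset_X by blast
      then show ?thesis
        using answer_set_rule[OF answer_set r(1,2)] constraint by simp
    next
      case (receive_plus u v s)
      then obtain j i where "(j, i) \<in> E" "v = CV i" "smult (\<mu>' j) (\<sigma>' (j, i)) = Plus"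
        using r(3) by auto
      then show ?thesis
        using receive_plus by auto
    next
      case (receive_minus u v s t)
      then obtain j i where "(j, i) \<in> E" "v = CV i" "smult (\<mu>' j) (\<sigma>' (j, i)) = Minus"
        using r(3) smult_neq by fastforce
      then show ?thesis
        using receive_minus by auto
    qed (use r(3) dom_\<mu> dom_\<sigma> in \<open>auto simp: \<mu>'_extends \<sigma>'_extends\<close>)
  qed
qed

lemma canonical_eq_X: "Collect canonical = X"
  using answer_set_eq_submodel[OF answer_set canonical_is_model canonical_subset_X] .

lemma receives_own_sign:
  assumes "i \<in> V - Inp"
  shows "\<exists>j. (j, i) \<in> E \<and> \<mu>' i = smult (\<mu>' j) (\<sigma>' (j, i))"
proof -
  let ?r = "\<lparr>hd = {}, pos = {LabelV (CV i) (csign (\<mu>' i))},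
      neg = {Receive (CV i) (csign (\<mu>' i)), Input (CV i)}\<rparr>"
  have "?r \<in> P"
    using assms by (intro ground_rule_in_program ground_PC_constraint) auto
  moreover have "pos ?r \<subseteq> X"
    using assms vertex_label_in_X by simp
  ultimately have "neg ?r \<inter> X \<noteq> {}"
    using answer_set_rule[OF answer_set] by fastforce
  then have "Receive (CV i) (csign (\<mu>' i)) \<in> X \<or> Input (CV i) \<in> X"
    by auto
  then have "Receive (CV i) (csign (\<mu>' i)) \<in> Collect canonical \<or> Input (CV i) \<in> Collect canonical"
    by (simp only: canonical_eq_X)
  then show ?thesis
    using assms by auto
qed

lemma consistent: "consistent V E \<sigma> Inp \<mu>"
  unfolding consistent_def
  using \<sigma>'_extends \<mu>'_extends receives_own_sign by blast

end

theorem theorem1: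
  fixes V :: "'v set" and E :: "('v \<times> 'v) set" and \<sigma> :: "'v \<times> 'v \<rightharpoonup> sign"
    and Inp :: "'v set" and \<mu> :: "'v \<rightharpoonup> sign"
  assumes "influence_graph V E \<sigma> Inp"
    and "dom \<mu> \<subseteq> V"
    and "\<exists>X. answer_set (PC_tau V E \<sigma> Inp \<mu>) X"
  shows "consistent V E \<sigma> Inp \<mu>"
proof -
  obtain X where "answer_set (PC_tau V E \<sigma> Inp \<mu>) X"
    using assms(3) by blast
  then interpret PC_answer_set V E \<sigma> Inp \<mu> X
    using assms(1,2) by unfold_locales (auto simp: influence_graph_def)
  show ?thesis
    by (rule consistent)
qed

end
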